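(* Let $G$ be a super edge-magic graph and $n\ge1$. Then for any orientations $\overrightarrow{G}$ of $G$ and $\overrightarrow{K}_{1,n}^l$ of $K_{1,n}^l$, $$|\sigma_{\overrightarrow{G}\otimes\overrightarrow{K}_{1,n}^l}|\ \ge\ (n+1)\,|\sigma_{G}|.$$
   Context: Graphs may have loops and multiple edges. For a $(p,q)$-graph $G$ ($p$ vertices, $q$ edges), an edge-magic labeling is a bijection $f:V(G)\cup E(G)\to[1,p+q]$ such that $f(x)+f(xy)+f(y)$ equals a constant $\mathrm{val}(f)$ (the valence) for every edge $xy$; it is super edge-magic if moreover $f(V(G))=[1,p]$, and $G$ is super edge-magic if it has such a labeling. The super edge-magic set $\sigma_H$ of a graph $H$ is the set of integers that are valences of super edge-magic labelings of $H$; for a digraph, $\sigma$ refers to its underlying graph. $K_{1,n}^l$ is the star $K_{1,n}$ with a loop attached at its central vertex. For digraphs $D$ and $F$, $D\otimes F$ is the digraph with vertex set $V(D)\times V(F)$ and arcs $((a,i),(b,j))$ for every arc $(a,b)$ of $D$ and arc $(i,j)$ of $F$ (loops allowed). *)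

theory Defs
  imports Main "Graph_Theory.Digraph"
begin

text \<open>A (finite) graph with loops and multiple edges is represented by a
  fin_digraph whose arc directions are ignored: an arc e joins tail G e and
  head G e (a loop if they coincide).  Parallel edges are distinct arcs.\<close>

definition sem_labeling ::
  "('v,'e) pre_digraph \<Rightarrow> ('v \<Rightarrow> nat) \<Rightarrow> ('e \<Rightarrow> nat) \<Rightarrow> nat \<Rightarrow> bool" where
  "sem_labeling G fv fe k \<longleftrightarrow>
     bij_betw fv (verts G) {1..card (verts G)} \<and>
     bij_betw fe (arcs G) {card (verts G) + 1 .. card (verts G) + card (arcs G)} \<and>
     (\<forall>e\<in>arcs G. fv (tail G e) + fe e + fv (head G e) = k)"

definition sem_set :: "('v,'e) pre_digraph \<Rightarrow> nat set" where
  "sem_set G = {k. \<exists>fv fe. sem_labeling G fv fe k}"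

definition super_edge_magic :: "('v,'e) pre_digraph \<Rightarrow> bool" where
  "super_edge_magic G \<longleftrightarrow> (\<exists>fv fe k. sem_labeling G fv fe k)"

definition orientation_of :: "('v,'e) pre_digraph \<Rightarrow> ('v,'e) pre_digraph \<Rightarrow> bool" where
  "orientation_of D G \<longleftrightarrow> verts D = verts G \<and> arcs D = arcs G \<and>
     (\<forall>e\<in>arcs G. {tail D e, head D e} = {tail G e, head G e})"

text \<open>K_{1,n}^l: centre 0, leaves 1..n; edge 0 is the loop at the centre,
  edge i (1 \<le> i \<le> n) joins 0 and i.\<close>
definition star_loop :: "nat \<Rightarrow> (nat, nat) pre_digraph" where
  "star_loop n = \<lparr> verts = {0..n}, arcs = {0..n}, tail = (\<lambda>_. 0), head = (\<lambda>i. i) \<rparr>"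

definition otimes :: "('a,'b) pre_digraph \<Rightarrow> ('c,'d) pre_digraph \<Rightarrow> ('a \<times> 'c, 'b \<times> 'd) pre_digraph" where
  "otimes D F = \<lparr> verts = verts D \<times> verts F, arcs = arcs D \<times> arcs F,
     tail = (\<lambda>(e,e'). (tail D e, tail F e')), head = (\<lambda>(e,e'). (head D e, head F e')) \<rparr>"

end

theory Submission
  imports Defs "HOL-Combinatorics.Transposition"
begin

text \<open>Take a super edge-magic labeling (f_V, f_E) of G with valence k and, for s \<le> n, the
  transposition \<sigma> of 0 and s on the leaves of the star. Label the vertex (v,i) of the product
  by (n+1) f_V(v) - \<sigma>(i) and the arc (e,i) by (n+1) f_E(e) - (n - \<sigma>(i)). Both maps are
  bijections onto the required intervals, and since each arc i of the star joins the centre 0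
  and i, the correction terms along the product arc (e,i) add up to \<sigma>(0) + \<sigma>(i) + n - \<sigma>(i)
  = n + s, whatever the orientations. So (n+1)k - (n+s) is a valence of the product, and these
  values are pairwise distinct for the n+1 choices of s and the different k.\<close>

lemma mult_add_eq_iff:
  fixes d x y x' y' :: nat
  assumes "y < d" "y' < d"
  shows "d * x + y = d * x' + y' \<longleftrightarrow> x = x' \<and> y = y'"
proof
  assume eq: "d * x + y = d * x' + y'"
  have "(d * x + y) div d = x" "(d * x + y) mod d = y"
       "(d * x' + y') div d = x'" "(d * x' + y') mod d = y'"
    using assms by simp_all
  with eq show "x = x' \<and> y = y'" by metis
qed simp

lemma mult_minus_eq_iff:
  fixes m a a' b b' :: nat
  assumes "1 \<le> a" "1 \<le> a'" "b \<le> m" "b' \<le> m"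
  shows "(m+1)*a - b = (m+1)*a' - b' \<longleftrightarrow> a = a' \<and> b = b'"
proof -
  have "(m+1)*a - b = (m+1)*(a-1) + (m - b) + 1" "(m+1)*a' - b' = (m+1)*(a'-1) + (m - b') + 1"
    using assms by (auto simp: algebra_simps dest!: le_Suc_ex)
  then have "(m+1)*a - b = (m+1)*a' - b' \<longleftrightarrow> a-1 = a'-1 \<and> m-b = m-b'"
    using mult_add_eq_iff[of "m-b" "m+1" "m-b'" "a-1" "a'-1"] by simp
  with assms show ?thesis by auto
qed

lemma sum_mult_minus:
  fixes m a1 a2 a3 b1 b2 b3 :: nat
  assumes "1 \<le> a1" "1 \<le> a2" "1 \<le> a3" "b1 \<le> m" "b2 \<le> m" "b3 \<le> m"
  shows "((m+1)*a1 - b1) + ((m+1)*a2 - b2) + ((m+1)*a3 - b3) = (m+1)*(a1+a2+a3) - (b1+b2+b3)"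
proof -
  have "b1 \<le> (m+1)*a1" "b2 \<le> (m+1)*a2" "b3 \<le> (m+1)*a3"
    using assms by (metis le_add1 mult_1_right mult_le_mono2 order_trans)+
  then show ?thesis by (simp add: distrib_left)
qed

lemma bij_betw_mult_minus:
  fixes g :: "'a \<Rightarrow> nat" and h :: "'b \<Rightarrow> nat"
  assumes g: "bij_betw g A {c+1..c+P}" and h: "bij_betw h B {0..m}"
  shows "bij_betw (\<lambda>(a,b). (m+1)*g a - h b) (A \<times> B) {(m+1)*c+1 .. (m+1)*(c+P)}"
    (is "bij_betw ?f _ ?I")
proof -
  have g_range: "g a \<in> {c+1..c+P}" if "a \<in> A" for a using bij_betw_apply[OF g] that .
  have h_range: "h b \<in> {0..m}" if "b \<in> B" for b using bij_betw_apply[OF h] that .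
  have inj: "inj_on ?f (A \<times> B)"
  proof (rule inj_onI, clarify)
    fix a b a' b' assume ab: "a \<in> A" "b \<in> B" "a' \<in> A" "b' \<in> B"
      and "(m+1)*g a - h b = (m+1)*g a' - h b'"
    moreover have "1 \<le> g a" "1 \<le> g a'" "h b \<le> m" "h b' \<le> m"
      using ab g_range h_range by force+
    ultimately have "g a = g a' \<and> h b = h b'"
      using mult_minus_eq_iff[of "g a" "g a'" "h b" m "h b'"] by blast
    with ab g h show "a = a' \<and> b = b'" by (auto simp: bij_betw_def dest: inj_onD)
  qed
  have "?f ` (A \<times> B) \<subseteq> ?I"
  proof clarify
    fix a b assume "a \<in> A" "b \<in> B"
    with g_range h_range have "c+1 \<le> g a" "g a \<le> c+P" "h b \<le> m" by auto
    then have "(m+1)*c + (m+1) \<le> (m+1)*g a" "(m+1)*g a \<le> (m+1)*(c+P)"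
      using mult_le_mono2 by (metis distrib_left mult_1_right)+
    with \<open>h b \<le> m\<close> show "(m+1)*g a - h b \<in> ?I" by auto
  qed
  moreover have "card (A \<times> B) = card ?I"
    using bij_betw_same_card[OF g] bij_betw_same_card[OF h]
    by (simp add: card_cartesian_product algebra_simps)
  ultimately have "?f ` (A \<times> B) = ?I"
    using inj by (simp add: card_image card_subset_eq)
  with inj show ?thesis by (simp add: bij_betw_def)
qed

lemma bij_betw_diff_atLeastAtMost: "bij_betw (\<lambda>i. n - i) {0..n::nat} {0..n}"
  by (rule bij_betw_byWitness[where f' = "\<lambda>i. n - i"]) auto

lemma sem_labeling_orientation:
  assumes "orientation_of D G"
  shows "sem_labeling D fv fe k \<longleftrightarrow> sem_labeling G fv fe k"
proof -
  have "fv (tail D e) + fe e + fv (head D e) = fv (tail G e) + fe e + fv (head G e)"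
    if "e \<in> arcs G" for e
    using assms that by (auto simp: orientation_of_def doubleton_eq_iff)
  with assms show ?thesis
    by (auto simp: sem_labeling_def orientation_of_def)
qed

lemma sem_set_orientation: "orientation_of D G \<Longrightarrow> sem_set D = sem_set G"
  by (simp add: sem_set_def sem_labeling_orientation)

lemma wf_digraph_orientation:
  assumes "orientation_of D G" "wf_digraph G"
  shows "wf_digraph D"
proof
  fix e assume "e \<in> arcs D"
  with assms have "e \<in> arcs G" "{tail D e, head D e} = {tail G e, head G e}" "verts D = verts G"
    by (auto simp: orientation_of_def)
  with \<open>wf_digraph G\<close> show "tail D e \<in> verts D" "head D e \<in> verts D"
    by (auto simp: doubleton_eq_iff wf_digraph_def)
qed

lemma fin_digraph_orientation:
  "orientation_of D G \<Longrightarrow> fin_digraph G \<Longrightarrow> fin_digraph D"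
  by (auto simp: fin_digraph_def fin_digraph_axioms_def orientation_of_def
      intro: wf_digraph_orientation)

lemma fin_digraph_star_loop: "fin_digraph (star_loop n)"
  by unfold_locales (auto simp: star_loop_def)

lemma fin_digraph_otimes:
  assumes "fin_digraph D" "fin_digraph F"
  shows "fin_digraph (otimes D F)"
proof -
  interpret D: fin_digraph D by fact
  interpret F: fin_digraph F by fact
  show ?thesis by unfold_locales (auto simp: otimes_def)
qed

lemma sem_set_subset_atLeastAtMost:
  assumes "fin_digraph H" "arcs H \<noteq> {}"
  shows "sem_set H \<subseteq> {3 .. 3 * card (verts H) + card (arcs H)}"
proof
  interpret fin_digraph H by fact
  fix k assume "k \<in> sem_set H"
  then obtain fv fe where L: "sem_labeling H fv fe k" by (auto simp: sem_set_def)
  obtain e where e: "e \<in> arcs H" using assms(2) by blast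
  from L have fv: "bij_betw fv (verts H) {1..card (verts H)}"
    and fe: "bij_betw fe (arcs H) {card (verts H) + 1 .. card (verts H) + card (arcs H)}"
    and k: "k = fv (tail H e) + fe e + fv (head H e)"
    using e by (auto simp: sem_labeling_def)
  have "fv (tail H e) \<in> {1..card (verts H)}" "fv (head H e) \<in> {1..card (verts H)}"
    using bij_betw_apply[OF fv] e by simp_all
  moreover have "fe e \<in> {card (verts H) + 1 .. card (verts H) + card (arcs H)}"
    using bij_betw_apply[OF fe] e by simp
  ultimately show "k \<in> {3 .. 3 * card (verts H) + card (arcs H)}" using k by auto
qed

lemma sem_set_eq_UNIV_if_no_arcs:
  assumes "super_edge_magic G" "arcs G = {}"
  shows "sem_set G = UNIV"
  using assms by (auto simp: super_edge_magic_def sem_set_def sem_labeling_def)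

lemma sem_labeling_otimes_star_loop:
  fixes D :: "('v,'e) pre_digraph" and S :: "(nat,nat) pre_digraph"
  assumes D: "wf_digraph D" and L: "sem_labeling D fv fe k"
    and S: "orientation_of S (star_loop n)" and "s \<le> n"
  defines "\<sigma> \<equiv> transpose 0 s"
  shows "sem_labeling (otimes D S)
    (\<lambda>(v,i). (n+1)*fv v - \<sigma> i) (\<lambda>(e,i). (n+1)*fe e - (n - \<sigma> i)) ((n+1)*k - (n+s))"
proof -
  interpret wf_digraph D by (fact D)
  let ?p = "card (verts D)" and ?q = "card (arcs D)"
  have verts_S: "verts S = {0..n}" and arcs_S: "arcs S = {0..n}"
    and ends_S: "\<And>i. i \<in> {0..n} \<Longrightarrow> {tail S i, head S i} = {0, i}"
    using S by (auto simp: orientation_of_def star_loop_def)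
  have fv: "bij_betw fv (verts D) {0+1..0+?p}"
    and fe: "bij_betw fe (arcs D) {?p+1..?p+?q}"
    and valence: "\<And>e. e \<in> arcs D \<Longrightarrow> fv (tail D e) + fe e + fv (head D e) = k"
    using L by (auto simp: sem_labeling_def)
  have \<sigma>: "bij_betw \<sigma> {0..n} {0..n}"
    using \<open>s \<le> n\<close> by (simp add: \<sigma>_def)
  have \<tau>: "bij_betw (\<lambda>i. n - \<sigma> i) {0..n} {0..n}"
    using bij_betw_trans[OF \<sigma> bij_betw_diff_atLeastAtMost] by (simp add: comp_def)
  have "bij_betw (\<lambda>(v,i). (n+1)*fv v - \<sigma> i) (verts (otimes D S)) {1..card (verts (otimes D S))}"
    using bij_betw_mult_minus[OF fv \<sigma>] verts_S
    by (simp add: otimes_def card_cartesian_product algebra_simps)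
  moreover have "bij_betw (\<lambda>(e,i). (n+1)*fe e - (n - \<sigma> i)) (arcs (otimes D S))
      {card (verts (otimes D S)) + 1 .. card (verts (otimes D S)) + card (arcs (otimes D S))}"
    using bij_betw_mult_minus[OF fe \<tau>] verts_S arcs_S
    by (simp add: otimes_def card_cartesian_product algebra_simps)
  moreover have "(n+1)*fv (tail D e) - \<sigma> (tail S i) + ((n+1)*fe e - (n - \<sigma> i))
      + ((n+1)*fv (head D e) - \<sigma> (head S i)) = (n+1)*k - (n+s)"
    if "e \<in> arcs D" "i \<in> {0..n}" for e i
  proof -
    have ends: "tail S i = 0 \<and> head S i = i \<or> tail S i = i \<and> head S i = 0"
      using ends_S[OF \<open>i \<in> {0..n}\<close>] by (simp add: doubleton_eq_iff)
    then have "\<sigma> (tail S i) + \<sigma> (head S i) = s + \<sigma> i"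
      by (auto simp: \<sigma>_def)
    moreover have "\<sigma> (tail S i) \<le> n" "\<sigma> (head S i) \<le> n" "\<sigma> i \<le> n"
      using ends \<open>i \<in> {0..n}\<close> bij_betw_apply[OF \<sigma>] by fastforce+
    moreover have "1 \<le> fv (tail D e)" "1 \<le> fv (head D e)" "1 \<le> fe e"
      using that bij_betw_apply[OF fv] bij_betw_apply[OF fe] by force+
    ultimately show ?thesis
      using sum_mult_minus[of "fv (tail D e)" "fe e" "fv (head D e)" "\<sigma> (tail S i)" n "n - \<sigma> i"
          "\<sigma> (head S i)"] valence[OF \<open>e \<in> arcs D\<close>]
      by simp
  qed
  ultimately show ?thesis
    unfolding sem_labeling_def by (simp add: otimes_def arcs_S)
qed

lemma sem_set_otimes_star_loop:
  assumes "wf_digraph D" "orientation_of S (star_loop n)" "k \<in> sem_set D" "s \<le> n"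
  shows "(n+1)*k - (n+s) \<in> sem_set (otimes D S)"
  using assms sem_labeling_otimes_star_loop unfolding sem_set_def by blast

lemma inj_on_star_loop_valence:
  fixes n :: nat
  shows "inj_on (\<lambda>(k,s). (n+1)*k - (n+s)) ({2..} \<times> {0..n})"
proof (rule inj_onI)
  fix x y assume "x \<in> {2..} \<times> {0..n}" "y \<in> {2..} \<times> {0..n}"
    and "(\<lambda>(k,s). (n+1)*k - (n+s)) x = (\<lambda>(k,s). (n+1)*k - (n+s)) y"
  then obtain k s k' s' where xy: "x = (k,s)" "y = (k',s')"
    and "k \<ge> 2" "s \<le> n" "k' \<ge> 2" "s' \<le> n"
    and eq: "(n+1)*k - (n+s) = (n+1)*k' - (n+s')"
    by auto
  moreover have "n + s \<le> (n+1)*k" "n + s' \<le> (n+1)*k'"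
    using \<open>k \<ge> 2\<close> \<open>k' \<ge> 2\<close> \<open>s \<le> n\<close> \<open>s' \<le> n\<close>
    by (metis add_mono mult_le_mono2 mult_2_right mult_2 le_add1 order_trans)+
  ultimately have "(n+1)*k - s = (n+1)*k' - s'" by linarith
  with \<open>k \<ge> 2\<close> \<open>s \<le> n\<close> \<open>k' \<ge> 2\<close> \<open>s' \<le> n\<close> have "k = k' \<and> s = s'"
    by (subst (asm) mult_minus_eq_iff) auto
  with xy show "x = y" by simp
qed

theorem mainTheorem6:
  fixes G D :: "('v,'e) pre_digraph" and S :: "(nat, nat) pre_digraph" and n :: nat
  assumes "fin_digraph G"
    and "super_edge_magic G"
    and "n \<ge> 1"
    and "orientation_of D G"
    and "orientation_of S (star_loop n)"
  shows "card (sem_set (otimes D S)) \<ge> (n + 1) * card (sem_set G)"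
proof (cases "arcs G = {}")
  case True
  \<comment> \<open>every k is a valence, and card of the infinite set UNIV is 0\<close>
  then show ?thesis using sem_set_eq_UNIV_if_no_arcs[OF assms(2)] by simp
next
  case False
  let ?P = "otimes D S" and ?val = "\<lambda>(k,s). (n+1)*k - (n+s)"
  have D: "fin_digraph D" using fin_digraph_orientation[OF assms(4,1)] .
  have "fin_digraph ?P"
    using fin_digraph_otimes D fin_digraph_orientation[OF assms(5) fin_digraph_star_loop] .
  moreover have "arcs ?P \<noteq> {}"
    using False assms(4,5) by (auto simp: otimes_def orientation_of_def star_loop_def)
  ultimately have "finite (sem_set ?P)" using sem_set_subset_atLeastAtMost finite_subset by blast
  moreover have "?val ` (sem_set G \<times> {0..n}) \<subseteq> sem_set ?P"
    using sem_set_otimes_star_loop[OF fin_digraph.axioms(1)[OF D] assms(5)]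
      sem_set_orientation[OF assms(4)] by auto
  moreover have "inj_on ?val (sem_set G \<times> {0..n})"
    using sem_set_subset_atLeastAtMost[OF assms(1) False]
    by (intro inj_on_subset[OF inj_on_star_loop_valence]) auto
  ultimately have "card (sem_set G \<times> {0..n}) \<le> card (sem_set ?P)"
    using card_inj_on_le by blast
  then show ?thesis by (simp add: card_cartesian_product mult.commute)
qed

end
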